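(* In the setting below, let $\mathfrak f=\mathrm{Im}\,\beta\subset\mathfrak g$, $\mathfrak f^\perp=\ker\beta\subset\mathfrak g^*$, and let $s:\mathfrak f\to\mathfrak g^*$ be a linear map with $\beta\circ s=\mathrm{id}_{\mathfrak f}$. Then $\mathfrak g\oplus i\mathfrak f$ is a real Lie subalgebra of $\hat{\mathfrak g}$, $\mathfrak f^\perp$ is a $(\mathfrak g\oplus i\mathfrak f)$-module under $(x+iy)\cdot a^*=\mathrm{ad}^*(x)a^*$, and for each sign the bilinear map $\tau_\pm(x_1+iy_1,x_2+iy_2)=\pm\big(\mathrm{ad}^*(x_1)s(y_2)-\mathrm{ad}^*(x_2)s(y_1)-s([x_1,y_2])+s([x_2,y_1])\big)$ ($x_j\in\mathfrak g$, $y_j\in\mathfrak f$) takes values in $\mathfrak f^\perp$ and is a $2$-cocycle of $\mathfrak g\oplus i\mathfrak f$ with values in $\mathfrak f^\perp$. Moreover $\mathcal D(\mathfrak g)\cong(\mathfrak g\oplus i\mathfrak f)\ltimes_{\tau_\pm}\mathfrak f^\perp$ as Lie algebras, via $(x+iy,a^* )\mapsto S_\pm(x+iy)+\iota(a^* )$, where $S_\pm(x+iy)=(x\mp\alpha(s(y)),\pm s(y))$ and $\iota(a^* )=(-\alpha(a^* ),a^* )$.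
   Context: Setting: $\mathfrak g$ is a finite-dimensional real Lie algebra and $r\in\mathfrak g\otimes\mathfrak g$ (identified with $r:\mathfrak g^*\to\mathfrak g$, $\langle r(a^* ),b^*\rangle=\langle a^*\otimes b^*,r\rangle$) is a solution of the type II CYBE $[r_{12},r_{13}]+[r_{12},r_{23}]+[r_{13},r_{23}]=\frac12[r_{13}+r_{31},r_{23}+r_{32}]$ (for $r=\sum a_i\otimes b_i$: $[r_{12},r_{13}]=\sum[a_i,a_j]\otimes b_i\otimes b_j$, $[r_{12},r_{23}]=\sum a_i\otimes[b_i,a_j]\otimes b_j$, $[r_{13},r_{23}]=\sum a_i\otimes a_j\otimes[b_i,b_j]$; with $r+\sigma(r)=\sum c_k\otimes d_k$, $[r_{13}+r_{31},r_{23}+r_{32}]=\sum c_k\otimes c_l\otimes[d_k,d_l]$), whose symmetric part $\beta=(r+r^t)/2$ is invariant ($(\mathrm{ad}(x)\otimes\mathrm{id}+\mathrm{id}\otimes\mathrm{ad}(x))\beta=0$); $\alpha=(r-r^t)/2$. Coadjoint action: $\langle\mathrm{ad}^*(x)a^*,y\rangle=-\langle a^*,[x,y]\rangle$. On $\mathfrak g^*$ set $[a^*,b^*]_\delta=\mathrm{ad}^*(\alpha(a^* ))b^*-\mathrm{ad}^*(\alpha(b^* ))a^*$ and for $a^*\in\mathfrak g^*,x\in\mathfrak g$ define $\mathrm{ad}^*(a^* )x\in\mathfrak g$ by $\langle\mathrm{ad}^*(a^* )x,b^*\rangle=-\langle x,[a^*,b^*]_\delta\rangle$. The Drinfeld double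 $\mathcal D(\mathfrak g)=\mathfrak g\oplus\mathfrak g^*$ has bracket $[(x,a^* ),(y,b^* )]=([x,y]+\mathrm{ad}^*(a^* )y-\mathrm{ad}^*(b^* )x,[a^*,b^*]_\delta+\mathrm{ad}^*(x)b^*-\mathrm{ad}^*(y)a^* )$. $\hat{\mathfrak g}=\mathfrak g\oplus i\mathfrak g$ is the complexification viewed as a real Lie algebra. For a Lie algebra $\mathfrak h$, an $\mathfrak h$-module $V$ and a 2-cocycle $\tau$, $\mathfrak h\ltimes_\tau V$ is $\mathfrak h\oplus V$ with bracket $[(X,u),(Y,v)]=([X,Y],X\cdot v-Y\cdot u+\tau(X,Y))$. *)

theory Defs
  imports "HOL-Analysis.Analysis"
begin

(* Conventions.  g = real^'n with standard basis e_i = axis i 1; g^* = real^'n with the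
   dual basis, so the pairing <a*, x> is the dot product  a \<bullet> x.
   A tensor r = \<Sum>_{i,j} R$i$j e_i \<otimes> e_j in g\<otimes>g is the matrix R :: real^'n^'n. *)

definition lie_algebra :: "(real^'n::finite \<Rightarrow> real^'n \<Rightarrow> real^'n) \<Rightarrow> bool" where
  "lie_algebra br \<longleftrightarrow> bilinear br \<and> (\<forall>x. br x x = 0) \<and>
     (\<forall>x y z. br x (br y z) + br y (br z x) + br z (br x y) = 0)"

definition sc :: "(real^'n::finite \<Rightarrow> real^'n \<Rightarrow> real^'n) \<Rightarrow> 'n \<Rightarrow> 'n \<Rightarrow> 'n \<Rightarrow> real" where
  "sc br i j k = br (axis i 1) (axis j 1) $ k"

(* components (p,q,s) of [r12,r13] + [r12,r23] + [r13,r23] *)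
definition cybe_lhs :: "(real^'n::finite \<Rightarrow> real^'n \<Rightarrow> real^'n) \<Rightarrow> real^'n^'n \<Rightarrow> 'n \<Rightarrow> 'n \<Rightarrow> 'n \<Rightarrow> real" where
  "cybe_lhs br R p q s =
     (\<Sum>i\<in>UNIV. \<Sum>k\<in>UNIV. R$i$q * R$k$s * sc br i k p)
   + (\<Sum>j\<in>UNIV. \<Sum>k\<in>UNIV. R$p$j * R$k$s * sc br j k q)
   + (\<Sum>j\<in>UNIV. \<Sum>l\<in>UNIV. R$p$j * R$q$l * sc br j l s)"

(* components (p,q,s) of [r13 + r31, r23 + r32] *)
definition cybe_rhs :: "(real^'n::finite \<Rightarrow> real^'n \<Rightarrow> real^'n) \<Rightarrow> real^'n^'n \<Rightarrow> 'n \<Rightarrow> 'n \<Rightarrow> 'n \<Rightarrow> real" where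
  "cybe_rhs br R p q s =
     (let S = R + transpose R in \<Sum>j\<in>UNIV. \<Sum>l\<in>UNIV. S$p$j * S$q$l * sc br j l s)"

definition typeII_CYBE :: "(real^'n::finite \<Rightarrow> real^'n \<Rightarrow> real^'n) \<Rightarrow> real^'n^'n \<Rightarrow> bool" where
  "typeII_CYBE br R \<longleftrightarrow> (\<forall>p q s. cybe_lhs br R p q s = (1/2) * cybe_rhs br R p q s)"

definition sym_part :: "real^'n^'n \<Rightarrow> real^'n^'n" where
  "sym_part R = (1/2) *\<^sub>R (R + transpose R)"

definition skew_part :: "real^'n^'n \<Rightarrow> real^'n^'n" where
  "skew_part R = (1/2) *\<^sub>R (R - transpose R)"

(* (ad x \<otimes> id + id \<otimes> ad x) B = 0, in components *)
definition ad_invariant :: "(real^'n::finite \<Rightarrow> real^'n \<Rightarrow> real^'n) \<Rightarrow> real^'n^'n \<Rightarrow> bool" where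
  "ad_invariant br B \<longleftrightarrow> (\<forall>x p q.
     (\<Sum>i\<in>UNIV. B$i$q * br x (axis i 1) $ p) + (\<Sum>j\<in>UNIV. B$p$j * br x (axis j 1) $ q) = 0)"

(* the map g^* \<rightarrow> g attached to a tensor: <M a', b'> = <a' \<otimes> b', M> *)
definition tmap :: "real^'n^'n \<Rightarrow> real^'n::finite \<Rightarrow> real^'n" where
  "tmap M a = (\<chi> j. \<Sum>i\<in>UNIV. M$i$j * a$i)"

(* coadjoint action: <coad x a, y> = - <a, [x,y]> *)
definition coad :: "(real^'n::finite \<Rightarrow> real^'n \<Rightarrow> real^'n) \<Rightarrow> real^'n \<Rightarrow> real^'n \<Rightarrow> real^'n" where
  "coad br x a = (\<chi> j. - (a \<bullet> br x (axis j 1)))"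

definition brd :: "(real^'n::finite \<Rightarrow> real^'n \<Rightarrow> real^'n) \<Rightarrow> real^'n^'n \<Rightarrow> real^'n \<Rightarrow> real^'n \<Rightarrow> real^'n" where
  "brd br A a b = coad br (tmap A a) b - coad br (tmap A b) a"

definition coadd :: "(real^'n::finite \<Rightarrow> real^'n \<Rightarrow> real^'n) \<Rightarrow> real^'n^'n \<Rightarrow> real^'n \<Rightarrow> real^'n \<Rightarrow> real^'n" where
  "coadd br A a x = (\<chi> j. - (x \<bullet> brd br A a (axis j 1)))"

(* bracket of the Drinfeld double g \<oplus> g^* (A = \<alpha>) *)
definition dbr :: "(real^'n::finite \<Rightarrow> real^'n \<Rightarrow> real^'n) \<Rightarrow> real^'n^'n \<Rightarrow>
     ((real^'n) \<times> (real^'n)) \<Rightarrow> ((real^'n) \<times> (real^'n)) \<Rightarrow> ((real^'n) \<times> (real^'n))" where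
  "dbr br A u v =
     (br (fst u) (fst v) + coadd br A (snd u) (fst v) - coadd br A (snd v) (fst u),
      brd br A (snd u) (snd v) + coad br (fst u) (snd v) - coad br (fst v) (snd u))"

(* bracket of the complexification g \<oplus> i g, (x,y) meaning x + i y *)
definition cbr :: "(real^'n::finite \<Rightarrow> real^'n \<Rightarrow> real^'n) \<Rightarrow>
     ((real^'n) \<times> (real^'n)) \<Rightarrow> ((real^'n) \<times> (real^'n)) \<Rightarrow> ((real^'n) \<times> (real^'n))" where
  "cbr br u v = (br (fst u) (fst v) - br (snd u) (snd v), br (fst u) (snd v) + br (snd u) (fst v))"

definition linear_on :: "'a::real_vector set \<Rightarrow> ('a \<Rightarrow> 'b::real_vector) \<Rightarrow> bool" where
  "linear_on D f \<longleftrightarrow> (\<forall>x\<in>D. \<forall>y\<in>D. f (x + y) = f x + f y) \<and> (\<forall>x\<in>D. \<forall>c. f (c *\<^sub>R x) = c *\<^sub>R f x)"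

definition bilinear_on :: "'a::real_vector set \<Rightarrow> 'b::real_vector set \<Rightarrow> ('a \<Rightarrow> 'b \<Rightarrow> 'c::real_vector) \<Rightarrow> bool" where
  "bilinear_on D E f \<longleftrightarrow> (\<forall>x\<in>D. linear_on E (f x)) \<and> (\<forall>y\<in>E. linear_on D (\<lambda>x. f x y))"

definition lie_subalgebra :: "('a::real_vector \<Rightarrow> 'a \<Rightarrow> 'a) \<Rightarrow> 'a set \<Rightarrow> bool" where
  "lie_subalgebra brH L \<longleftrightarrow> subspace L \<and> (\<forall>u\<in>L. \<forall>v\<in>L. brH u v \<in> L)"

definition lie_module :: "('a::real_vector \<Rightarrow> 'a \<Rightarrow> 'a) \<Rightarrow> 'a set \<Rightarrow> ('a \<Rightarrow> 'v::real_vector \<Rightarrow> 'v) \<Rightarrow> 'v set \<Rightarrow> bool" where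
  "lie_module brH L act V \<longleftrightarrow> subspace V \<and> (\<forall>u\<in>L. \<forall>a\<in>V. act u a \<in> V) \<and> bilinear_on L V act \<and>
     (\<forall>u\<in>L. \<forall>v\<in>L. \<forall>a\<in>V. act (brH u v) a = act u (act v a) - act v (act u a))"

definition lie_2cocycle :: "('a::real_vector \<Rightarrow> 'a \<Rightarrow> 'a) \<Rightarrow> 'a set \<Rightarrow> ('a \<Rightarrow> 'v::real_vector \<Rightarrow> 'v) \<Rightarrow> 'v set \<Rightarrow> ('a \<Rightarrow> 'a \<Rightarrow> 'v) \<Rightarrow> bool" where
  "lie_2cocycle brH L act V t \<longleftrightarrow> (\<forall>u\<in>L. \<forall>v\<in>L. t u v \<in> V) \<and> bilinear_on L L t \<and> (\<forall>u\<in>L. t u u = 0) \<and>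
     (\<forall>x\<in>L. \<forall>y\<in>L. \<forall>z\<in>L.
        act x (t y z) - act y (t x z) + act z (t x y)
        - t (brH x y) z + t (brH x z) y - t (brH y z) x = 0)"

definition semidirect :: "('a \<Rightarrow> 'a \<Rightarrow> 'a) \<Rightarrow> ('a \<Rightarrow> 'v::real_vector \<Rightarrow> 'v) \<Rightarrow> ('a \<Rightarrow> 'a \<Rightarrow> 'v) \<Rightarrow>
     ('a \<times> 'v) \<Rightarrow> ('a \<times> 'v) \<Rightarrow> ('a \<times> 'v)" where
  "semidirect brH act t p q = (brH (fst p) (fst q), act (fst p) (snd q) - act (fst q) (snd p) + t (fst p) (fst q))"

definition lie_iso :: "('a::real_vector \<Rightarrow> 'a \<Rightarrow> 'a) \<Rightarrow> 'a set \<Rightarrow> ('b::real_vector \<Rightarrow> 'b \<Rightarrow> 'b) \<Rightarrow> 'b set \<Rightarrow> ('a \<Rightarrow> 'b) \<Rightarrow> bool" where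
  "lie_iso br1 D1 br2 D2 \<phi> \<longleftrightarrow> bij_betw \<phi> D1 D2 \<and> linear_on D1 \<phi> \<and>
     (\<forall>p\<in>D1. \<forall>q\<in>D1. \<phi> (br1 p q) = br2 (\<phi> p) (\<phi> q))"

(* g \<oplus> i f, with f = Im \<beta> *)
definition g_if :: "real^'n^'n \<Rightarrow> ((real^'n::finite) \<times> (real^'n)) set" where
  "g_if B = {u. snd u \<in> range (tmap B)}"

(* f^\<perp> = ker \<beta> *)
definition fperp :: "real^'n^'n \<Rightarrow> (real^'n::finite) set" where
  "fperp B = {a. tmap B a = 0}"

definition tau :: "(real^'n::finite \<Rightarrow> real^'n \<Rightarrow> real^'n) \<Rightarrow> (real^'n \<Rightarrow> real^'n) \<Rightarrow> real \<Rightarrow>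
     ((real^'n) \<times> (real^'n)) \<Rightarrow> ((real^'n) \<times> (real^'n)) \<Rightarrow> real^'n" where
  "tau br s \<sigma> u v = \<sigma> *\<^sub>R (coad br (fst u) (s (snd v)) - coad br (fst v) (s (snd u))
                           - s (br (fst u) (snd v)) + s (br (fst v) (snd u)))"

(* (x + i y, a) maps to S_sigma (x+iy) + iota a *)
definition Phi :: "real^'n^'n \<Rightarrow> (real^'n::finite \<Rightarrow> real^'n) \<Rightarrow> real \<Rightarrow>
     (((real^'n) \<times> (real^'n)) \<times> (real^'n)) \<Rightarrow> ((real^'n) \<times> (real^'n))" where
  "Phi A s \<sigma> p = (fst (fst p) - \<sigma> *\<^sub>R tmap A (s (snd (fst p))), \<sigma> *\<^sub>R s (snd (fst p)))
                 + (- tmap A (snd p), snd p)"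

end

theory Submission imports Defs begin

(* Everything rests on two identities.  Invariance of \<beta> says that \<beta> intertwines the
   coadjoint and the adjoint action, \<beta>(ad\<^sup>*(x) a) = [x, \<beta> a]; hence f is an ideal and
   f\<^sup>\<perp> a submodule on which f acts trivially.  The type II CYBE, contracted with a \<otimes> b,
   says that \<alpha> is a homomorphism up to the \<beta>-term:
       [\<alpha> a, \<alpha> b] - \<alpha> [a, b]\<^sub>\<delta> = [\<beta> a, \<beta> b].  The map
   \<Phi> is a homomorphism because, on the graph {(x - \<alpha> c, c)}, the double bracket is
   computed by the identity above; bijectivity uses \<beta> \<circ> s = id. *)

lemma linear_basis_expansion:
  fixes f :: "real^'n::finite \<Rightarrow> 'b::real_vector"
  assumes "linear f"
  shows "f a = (\<Sum>p\<in>UNIV. a$p *\<^sub>R f (axis p 1))"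
proof -
  have "f a = f (\<Sum>p\<in>UNIV. a$p *\<^sub>R axis p 1)"
    using basis_expansion[of a] by (simp add: scalar_mult_eq_scaleR)
  also have "\<dots> = (\<Sum>p\<in>UNIV. a$p *\<^sub>R f (axis p 1))"
    using assms by (simp add: linear_sum linear_scale)
  finally show ?thesis .
qed

lemma linear_eq_on_axes:
  fixes f g :: "real^'n::finite \<Rightarrow> 'b::real_vector"
  assumes "linear f" "linear g" "\<And>p. f (axis p 1) = g (axis p 1)"
  shows "f a = g a"
  using linear_basis_expansion[OF assms(1), of a] linear_basis_expansion[OF assms(2), of a] assms(3)
  by simp

(* The covector j \<mapsto> <v, L e\<^sub>j> represents d \<mapsto> <v, L d>; this is how coad and coadd,
   defined componentwise, are related to their defining pairings. *)
lemma inner_covector_linear: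
  fixes L :: "real^'n::finite \<Rightarrow> real^'n"
  assumes "linear L"
  shows "(\<chi> j. v \<bullet> L (axis j 1)) \<bullet> d = v \<bullet> L d"
proof -
  have "v \<bullet> L d = (\<Sum>p\<in>UNIV. d$p * (v \<bullet> L (axis p 1)))"
    by (subst linear_basis_expansion[OF assms]) (simp add: inner_sum_right)
  then show ?thesis by (simp add: inner_vec_def mult.commute)
qed

lemma tmap_axis: "tmap M (axis p 1) $ j = M$p$j"
  by (simp add: tmap_def axis_def if_distrib cong: if_cong)

lemma tmap_component: "tmap M v $ k = (\<Sum>i\<in>UNIV. M$i$k * v$i)"
  by (simp add: tmap_def)

lemma tmap_linear: "linear (tmap M)"
  by (rule linearI) (simp_all add: tmap_def vec_eq_iff algebra_simps sum.distrib sum_distrib_left)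

lemmas tmap_simps = linear_add[OF tmap_linear] linear_scale[OF tmap_linear]
  linear_neg[OF tmap_linear] linear_diff[OF tmap_linear] linear_0[OF tmap_linear]

lemma tmap_adjoint: "tmap M a \<bullet> b = a \<bullet> tmap (transpose M) b"
  by (simp add: tmap_def inner_vec_def transpose_def sum_distrib_left sum_distrib_right
      algebra_simps; subst sum.swap; simp add: algebra_simps)

lemma tmap_uminus: "tmap (- M) a = - tmap M a"
  by (simp add: tmap_def vec_eq_iff sum_negf)

section \<open>Lie algebra structures on real^'n\<close>

locale lie_alg =
  fixes br :: "real^'n::finite \<Rightarrow> real^'n \<Rightarrow> real^'n"
  assumes lie: "lie_algebra br"
begin

lemma br_bilinear: "bilinear br"
  using lie by (simp add: lie_algebra_def)

lemmas br_simps = bilinear_ladd[OF br_bilinear] bilinear_radd[OF br_bilinear]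
  bilinear_lmul[OF br_bilinear] bilinear_rmul[OF br_bilinear]
  bilinear_lneg[OF br_bilinear] bilinear_rneg[OF br_bilinear]
  bilinear_lsub[OF br_bilinear] bilinear_rsub[OF br_bilinear]
  bilinear_lzero[OF br_bilinear] bilinear_rzero[OF br_bilinear]

lemma br_linear_left: "linear (\<lambda>x. br x y)"
  using br_bilinear by (simp add: bilinear_def)

lemma br_linear_right: "linear (br x)"
  using br_bilinear by (simp add: bilinear_def)

lemma br_antisym: "br y x = - br x y"
proof -
  have self: "br z z = 0" for z using lie by (simp add: lie_algebra_def)
  have "0 = br (x + y) (x + y)" by (simp add: self)
  also have "\<dots> = br x x + br x y + (br y x + br y y)" by (simp add: br_simps)
  finally have "br x y + br y x = 0" by (simp add: self)
  then show ?thesis by (simp add: eq_neg_iff_add_eq_0 add.commute)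
qed

lemma br_jacobi: "br x (br y z) + br y (br z x) + br z (br x y) = 0"
  using lie by (simp add: lie_algebra_def)

lemma br_derivation: "br (br x y) z = br x (br y z) - br y (br x z)"
  using br_jacobi[of x y z] br_antisym[of "br x y" z] br_antisym[of z x] by (simp add: br_simps algebra_simps)

lemma br_component: "br u v $ q = (\<Sum>j\<in>UNIV. \<Sum>l\<in>UNIV. u$j * v$l * sc br j l q)"
proof -
  have "br u v = (\<Sum>j\<in>UNIV. u$j *\<^sub>R br (axis j 1) v)"
    using linear_basis_expansion[OF br_linear_left] by blast
  moreover have "\<And>j. br (axis j 1) v = (\<Sum>l\<in>UNIV. v$l *\<^sub>R br (axis j 1) (axis l 1))"
    using linear_basis_expansion[OF br_linear_right] by blast
  ultimately show ?thesis by (simp add: sum_component sc_def sum_distrib_left algebra_simps)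
qed

lemma br_axis_component: "br u (axis i 1) $ k = (\<Sum>j\<in>UNIV. u$j * sc br j i k)"
  using linear_basis_expansion[OF br_linear_left[of "axis i 1"], of u] by (simp add: sum_component sc_def)

lemma coad_inner: "coad br x a \<bullet> y = - (a \<bullet> br x y)"
proof -
  have "coad br x a = (\<chi> j. (-a) \<bullet> br x (axis j 1))" by (simp add: coad_def)
  then show ?thesis using inner_covector_linear[OF br_linear_right, of "-a" x y] by simp
qed

lemma coad_simps:
  "coad br x (a + b) = coad br x a + coad br x b" "coad br x (c *\<^sub>R a) = c *\<^sub>R coad br x a"
  "coad br x (- a) = - coad br x a" "coad br x (a - b) = coad br x a - coad br x b"
  "coad br x 0 = 0"
  "coad br (x + y) a = coad br x a + coad br y a" "coad br (c *\<^sub>R x) a = c *\<^sub>R coad br x a"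
  "coad br (- x) a = - coad br x a" "coad br (x - y) a = coad br x a - coad br y a"
  "coad br 0 a = 0"
  by (simp_all add: coad_def vec_eq_iff br_simps inner_add_left inner_diff_left
      inner_add_right inner_diff_right algebra_simps)

lemma coad_linear: "linear (coad br x)"
  by (rule linearI) (simp_all add: coad_simps)

lemma coad_bracket: "coad br (br x y) a = coad br x (coad br y a) - coad br y (coad br x a)"
proof -
  have "coad br (br x y) a \<bullet> z = (coad br x (coad br y a) - coad br y (coad br x a)) \<bullet> z" for z
    by (simp add: coad_inner inner_diff_left br_derivation inner_diff_right)
  then show ?thesis using vector_eq_rdot by blast
qed

(* Jacobi identity of the complexification, imaginary part: the three terms of the
   cyclic sum expand into four real Jacobiators. *)
lemma cbr_jacobi_snd:
  "snd (cbr br (cbr br (x1,y1) (x2,y2)) (x3,y3)) - snd (cbr br (cbr br (x1,y1) (x3,y3)) (x2,y2))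
   + snd (cbr br (cbr br (x2,y2) (x3,y3)) (x1,y1)) = 0"
proof -
  let ?J = "\<lambda>a b c. br (br a b) c + br (br b c) a + br (br c a) b"
  have jac: "?J a b c = 0" for a b c
    using br_jacobi[of c a b] br_antisym[of "br a b" c] br_antisym[of "br b c" a]
      br_antisym[of "br c a" b] by (simp add: algebra_simps add_eq_0_iff)
  have "snd (cbr br (cbr br (x1,y1) (x2,y2)) (x3,y3)) - snd (cbr br (cbr br (x1,y1) (x3,y3)) (x2,y2))
   + snd (cbr br (cbr br (x2,y2) (x3,y3)) (x1,y1)) = ?J x1 x2 y3 + ?J x1 y2 x3 + ?J y1 x2 x3 - ?J y1 y2 y3"
    using br_antisym[of y3 x1] br_antisym[of x3 x1] br_antisym[of x3 y1] br_antisym[of y3 y1]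
    by (simp add: cbr_def br_simps algebra_simps)
  then show ?thesis by (simp add: jac)
qed

end

section \<open>Invariant symmetric tensors\<close>

locale invariant_sym_tensor = lie_alg +
  fixes B :: "real^'n^'n"
  assumes invariant: "ad_invariant br B"
    and symmetric: "transpose B = B"
begin

abbreviation "\<beta> \<equiv> tmap B"

lemma beta_selfadjoint: "\<beta> a \<bullet> b = a \<bullet> \<beta> b"
  using symmetric by (simp add: tmap_adjoint)

(* Invariance of B in operator form: \<beta> is a g-module map from g^* to g. *)
lemma beta_equivariant: "\<beta> (coad br x a) = br x (\<beta> a)"
proof (rule linear_eq_on_axes[where f="\<lambda>a. \<beta> (coad br x a)"])
  show "linear (\<lambda>a. \<beta> (coad br x a))"
    using linear_compose[OF coad_linear tmap_linear] by (simp add: o_def)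
  show "linear (\<lambda>a. br x (\<beta> a))"
    using linear_compose[OF tmap_linear br_linear_right] by (simp add: o_def)
  fix k
  show "\<beta> (coad br x (axis k 1)) = br x (\<beta> (axis k 1))"
  proof (subst vec_eq_iff, rule allI)
    fix p
    have inv: "(\<Sum>i\<in>UNIV. B$i$p * br x (axis i 1) $ k) + (\<Sum>j\<in>UNIV. B$k$j * br x (axis j 1) $ p) = 0"
      using invariant by (simp add: ad_invariant_def)
    have "\<beta> (coad br x (axis k 1)) $ p = - (\<Sum>i\<in>UNIV. B$i$p * br x (axis i 1) $ k)"
      by (simp add: tmap_def coad_def inner_axis' sum_negf)
    also have "\<dots> = (\<Sum>j\<in>UNIV. B$k$j * br x (axis j 1) $ p)" using inv by simp
    also have "\<dots> = br x (\<beta> (axis k 1)) $ p"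
      using linear_basis_expansion[OF br_linear_right[of x], of "\<beta> (axis k 1)"]
      by (simp add: sum_component tmap_axis)
    finally show "\<beta> (coad br x (axis k 1)) $ p = br x (\<beta> (axis k 1)) $ p" .
  qed
qed

lemma image_subspace: "subspace (range \<beta>)"
  by (rule linear_subspace_image[OF tmap_linear subspace_UNIV])

lemma image_ideal: "y \<in> range \<beta> \<Longrightarrow> br x y \<in> range \<beta>"
  by (metis beta_equivariant image_iff rangeI)

lemma image_ideal_left: "y \<in> range \<beta> \<Longrightarrow> br y x \<in> range \<beta>"
  using image_ideal subspace_neg[OF image_subspace] br_antisym by metis

lemma inner_bracket_image: "t \<bullet> br (\<beta> e) z = e \<bullet> br z (\<beta> t)"
proof -
  have "t \<bullet> br (\<beta> e) z = - (t \<bullet> \<beta> (coad br z e))"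
    using br_antisym[of "\<beta> e" z] by (simp add: beta_equivariant)
  also have "\<dots> = - (coad br z e \<bullet> \<beta> t)" by (metis beta_selfadjoint inner_commute)
  also have "\<dots> = e \<bullet> br z (\<beta> t)" by (simp add: coad_inner)
  finally show ?thesis .
qed

lemma coad_image_kernel: "\<beta> a = 0 \<Longrightarrow> coad br (\<beta> e) a = 0"
proof -
  assume a: "\<beta> a = 0"
  have "coad br (\<beta> e) a \<bullet> z = 0 \<bullet> z" for z
    using inner_bracket_image[of a e z] a by (simp add: coad_inner br_simps)
  then show ?thesis using vector_eq_rdot by blast
qed

lemma coad_image_antisym: "coad br (\<beta> a) b = - coad br (\<beta> b) a"
proof -
  have "coad br (\<beta> a) b \<bullet> d = - (coad br (\<beta> b) a \<bullet> d)" for d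
    using inner_bracket_image[of b a d] inner_bracket_image[of a b d] br_antisym[of d]
    by (simp add: coad_inner)
  then show ?thesis using vector_eq_rdot[of "coad br (\<beta> a) b" "- coad br (\<beta> b) a"] by simp
qed

(* A cyclic identity for the coadjoint action of brackets of elements of f; it is the
   f\<times>f\<times>f-part of the cocycle condition for \<tau>. *)
lemma coad_image_cyclic:
  "coad br (br (\<beta> a1) (\<beta> a2)) a3 - coad br (br (\<beta> a1) (\<beta> a3)) a2 + coad br (br (\<beta> a2) (\<beta> a3)) a1 = 0"
proof -
  let ?y1 = "\<beta> a1" and ?y2 = "\<beta> a2" and ?y3 = "\<beta> a3"
  have "(coad br (br ?y1 ?y2) a3 - coad br (br ?y1 ?y3) a2 + coad br (br ?y2 ?y3) a1) \<bullet> z = 0 \<bullet> z" for z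
  proof -
    have e1: "coad br (br ?y1 ?y2) a3 \<bullet> z = a2 \<bullet> br ?y1 (br z ?y3)"
      using inner_bracket_image[of a3 "coad br ?y1 a2" z]
      by (simp add: coad_inner beta_equivariant[symmetric])
    have e2: "coad br (br ?y1 ?y3) a2 \<bullet> z = - (a2 \<bullet> br (br ?y1 ?y3) z)" by (rule coad_inner)
    have e3: "coad br (br ?y2 ?y3) a1 \<bullet> z = - (a2 \<bullet> br ?y3 (br z ?y1))"
      using inner_bracket_image[of a1 "coad br ?y3 a2" z] br_antisym[of ?y2 ?y3]
      by (simp add: coad_inner beta_equivariant[symmetric] coad_simps br_simps)
    have "br ?y1 (br z ?y3) + br (br ?y1 ?y3) z - br ?y3 (br z ?y1) = 0"
      using br_jacobi[of ?y1 z ?y3] br_antisym[of "br ?y1 ?y3" z] br_antisym[of ?y1 ?y3]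
        br_antisym[of z ?y1] by (simp add: br_simps)
    then show ?thesis
      by (simp add: inner_add_left inner_diff_left e1 e2 e3 inner_add_right[symmetric]
          inner_diff_right[symmetric])
  qed
  then show ?thesis using vector_eq_rdot by blast
qed

end

section \<open>Type II solutions of the CYBE\<close>

locale typeII_solution = lie_alg +
  fixes R :: "real^'n^'n"
  assumes cybe: "typeII_CYBE br R"
    and sym_invariant: "ad_invariant br (sym_part R)"
begin

sublocale invariant_sym_tensor br "sym_part R"
proof unfold_locales
  show "ad_invariant br (sym_part R)" by (fact sym_invariant)
  show "transpose (sym_part R) = sym_part R" by (simp add: sym_part_def transpose_def vec_eq_iff)
qed

abbreviation "\<alpha> \<equiv> tmap (skew_part R)"

lemma alpha_skew: "\<alpha> a \<bullet> b = - (a \<bullet> \<alpha> b)"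
proof -
  have "transpose (skew_part R) = - skew_part R"
    by (simp add: skew_part_def transpose_def vec_eq_iff field_simps)
  then show ?thesis by (simp add: tmap_adjoint tmap_uminus)
qed

lemma r_split: "tmap R a = \<alpha> a + \<beta> a"
  by (simp add: vec_eq_iff tmap_def sym_part_def skew_part_def transpose_def
      sum.distrib[symmetric] field_simps)

lemma rt_split: "tmap (transpose R) a = \<beta> a - \<alpha> a"
  by (simp add: vec_eq_iff tmap_def sym_part_def skew_part_def transpose_def
      sum_subtractf[symmetric] field_simps)

(* The type II CYBE contracted with a \<otimes> b in its first two legs. *)
abbreviation cybe_pair :: "real^'n \<Rightarrow> real^'n \<Rightarrow> real^'n" where
  "cybe_pair a b \<equiv> br (tmap R a) (tmap R b) - tmap R (coad br (tmap R a) b)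
     - tmap R (coad br (tmap (transpose R) b) a) - 2 *\<^sub>R br (\<beta> a) (\<beta> b)"

lemma cybe_pair_axes: "cybe_pair (axis p 1) (axis q 1) = 0"
proof (subst vec_eq_iff, rule allI)
  fix s
  have "tmap R (coad br (tmap (transpose R) (axis q 1)) (axis p 1)) $ s
      = - (\<Sum>k\<in>UNIV. \<Sum>i\<in>UNIV. R$i$q * R$k$s * sc br i k p)"
    by (subst tmap_component)
      (simp add: coad_def inner_axis' br_axis_component tmap_axis transpose_def
        sum_distrib_left sum_negf algebra_simps)
  then have t1: "tmap R (coad br (tmap (transpose R) (axis q 1)) (axis p 1)) $ s
      = - (\<Sum>i\<in>UNIV. \<Sum>k\<in>UNIV. R$i$q * R$k$s * sc br i k p)"
    by (subst (asm) sum.swap)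
  have "tmap R (coad br (tmap R (axis p 1)) (axis q 1)) $ s
      = - (\<Sum>i\<in>UNIV. \<Sum>j\<in>UNIV. R$p$j * R$i$s * sc br j i q)"
    by (subst tmap_component)
      (simp add: coad_def inner_axis' br_axis_component tmap_axis sum_distrib_left sum_negf algebra_simps)
  then have t2: "tmap R (coad br (tmap R (axis p 1)) (axis q 1)) $ s
      = - (\<Sum>j\<in>UNIV. \<Sum>i\<in>UNIV. R$p$j * R$i$s * sc br j i q)"
    by (subst (asm) sum.swap)
  have t3: "br (tmap R (axis p 1)) (tmap R (axis q 1)) $ s
      = (\<Sum>j\<in>UNIV. \<Sum>l\<in>UNIV. R$p$j * R$q$l * sc br j l s)"
    by (simp add: br_component tmap_axis)
  have t4: "(2 *\<^sub>R br (\<beta> (axis p 1)) (\<beta> (axis q 1))) $ s = 1/2 * cybe_rhs br R p q s"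
    by (simp add: br_component tmap_axis sym_part_def cybe_rhs_def Let_def sum_distrib_left algebra_simps)
  have "cybe_lhs br R p q s = 1/2 * cybe_rhs br R p q s"
    using cybe by (simp add: typeII_CYBE_def)
  then show "cybe_pair (axis p 1) (axis q 1) $ s = 0 $ s"
    using t1 t2 t3 t4 by (simp add: cybe_lhs_def)
qed

(* Both sides are bilinear, so the CYBE on basis vectors gives it everywhere. *)
lemma cybe_pair_zero: "cybe_pair a b = 0"
proof -
  have lin_right: "linear (\<lambda>b. cybe_pair a b)" for a
    by (rule linearI) (simp_all add: tmap_simps coad_simps br_simps algebra_simps)
  have lin_left: "linear (\<lambda>a. cybe_pair a b)" for b
    by (rule linearI) (simp_all add: tmap_simps coad_simps br_simps algebra_simps)
  have "cybe_pair (axis p 1) b = 0" for p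
    using linear_eq_on_axes[OF lin_right[of "axis p 1"] linear_zero, of b] cybe_pair_axes by simp
  then show ?thesis using linear_eq_on_axes[OF lin_left[of b] linear_zero, of a] by simp
qed

lemma alpha_bracket_defect: "br (\<alpha> a) (\<alpha> b) - \<alpha> (brd br (skew_part R) a b) = br (\<beta> a) (\<beta> b)"
proof -
  have two: "2 * (v::real^'n) = 2 *\<^sub>R v" for v by (simp add: vec_eq_iff)
  have "cybe_pair a b = br (\<alpha> a) (\<alpha> b) - \<alpha> (brd br (skew_part R) a b) - br (\<beta> a) (\<beta> b)"
    unfolding r_split rt_split brd_def
    using coad_image_antisym[of a b] br_antisym[of "\<beta> a" "\<alpha> b"]
    by (simp add: tmap_simps coad_simps br_simps beta_equivariant algebra_simps) (simp add: two)
  then show ?thesis using cybe_pair_zero[of a b] by simp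
qed

lemma coadd_eq: "coadd br (skew_part R) a x = br (\<alpha> a) x + \<alpha> (coad br x a)"
proof -
  have lin: "linear (brd br (skew_part R) a)"
    by (rule linearI) (simp_all add: brd_def coad_simps tmap_simps algebra_simps)
  have "coadd br (skew_part R) a x \<bullet> d = (br (\<alpha> a) x + \<alpha> (coad br x a)) \<bullet> d" for d
  proof -
    have "coadd br (skew_part R) a x = (\<chi> j. (-x) \<bullet> brd br (skew_part R) a (axis j 1))"
      by (simp add: coadd_def)
    then have "coadd br (skew_part R) a x \<bullet> d = - (x \<bullet> brd br (skew_part R) a d)"
      using inner_covector_linear[OF lin, of "-x" d] by simp
    also have "\<dots> = d \<bullet> br (\<alpha> a) x + a \<bullet> br x (\<alpha> d)"
      using coad_inner[of "\<alpha> d" a x] coad_inner[of "\<alpha> a" d x] br_antisym[of "\<alpha> d" x]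
      by (simp add: brd_def inner_diff_right inner_commute[of x])
    also have "a \<bullet> br x (\<alpha> d) = \<alpha> (coad br x a) \<bullet> d"
      using coad_inner[of x a "\<alpha> d"] alpha_skew[of "coad br x a" d] by simp
    finally show ?thesis by (simp add: inner_add_left inner_add_right inner_commute)
  qed
  then show ?thesis using vector_eq_rdot by blast
qed

(* The double bracket on elements (x - \<alpha> c, c) of the form of \<Phi>'s image. *)
lemma dbr_graph:
  "dbr br (skew_part R) (x - \<alpha> c, c) (x' - \<alpha> c', c') =
   (br x x' - br (\<alpha> c) (\<alpha> c') + \<alpha> (brd br (skew_part R) c c') + \<alpha> (coad br x' c - coad br x c'),
    coad br x c' - coad br x' c)"
  using br_antisym[of "\<alpha> c'" x] br_antisym[of "\<alpha> c'" "\<alpha> c"]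
  by (simp add: dbr_def coadd_eq brd_def br_simps coad_simps tmap_simps algebra_simps)

end

section \<open>The decomposition of the Drinfeld double\<close>

locale double_decomposition = typeII_solution br R
  for br :: "real^'n::finite \<Rightarrow> real^'n \<Rightarrow> real^'n" and R +
  fixes s and \<sigma> :: real
  assumes s_linear: "linear_on (range (tmap (sym_part R))) s"
    and s_section: "\<forall>y\<in>range (tmap (sym_part R)). tmap (sym_part R) (s y) = y"
    and sign: "\<sigma> = 1 \<or> \<sigma> = -1"
begin

abbreviation "L \<equiv> g_if (sym_part R)"
abbreviation "V \<equiv> fperp (sym_part R)"
abbreviation "act \<equiv> \<lambda>u a. coad br (fst u) a"

lemma L_iff: "u \<in> L \<longleftrightarrow> snd u \<in> range \<beta>" by (simp add: g_if_def)
lemma V_iff: "a \<in> V \<longleftrightarrow> \<beta> a = 0" by (simp add: fperp_def)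

lemma s_add: "y \<in> range \<beta> \<Longrightarrow> z \<in> range \<beta> \<Longrightarrow> s (y + z) = s y + s z"
  using s_linear unfolding linear_on_def by blast
lemma s_scale: "y \<in> range \<beta> \<Longrightarrow> s (c *\<^sub>R y) = c *\<^sub>R s y"
  using s_linear unfolding linear_on_def by blast
lemma s_diff: "y \<in> range \<beta> \<Longrightarrow> z \<in> range \<beta> \<Longrightarrow> s (y - z) = s y - s z"
  using s_add[of y "-z"] s_scale[of z "-1"] subspace_neg[OF image_subspace, of z] by simp
lemma beta_s: "y \<in> range \<beta> \<Longrightarrow> \<beta> (s y) = y"
  using s_section by blast

lemma sign_square: "\<sigma> * \<sigma> = 1" using sign by auto

(* g \<oplus> i f is closed under the complex bracket because f is an ideal. *)
lemma subalgebra: "lie_subalgebra (cbr br) L"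
  unfolding lie_subalgebra_def
proof (intro conjI ballI)
  show "subspace L"
    by (simp add: subspace_def L_iff subspace_0[OF image_subspace] subspace_add[OF image_subspace]
        subspace_scale[OF image_subspace])
  fix u v assume "u \<in> L" "v \<in> L"
  then have "br (fst u) (snd v) \<in> range \<beta>" "br (snd u) (fst v) \<in> range \<beta>"
    using image_ideal image_ideal_left L_iff by auto
  then show "cbr br u v \<in> L"
    by (simp add: cbr_def L_iff subspace_add[OF image_subspace])
qed

(* ker \<beta> is a submodule since \<beta> is equivariant; in the real part [x, x'] - [y, y'] of a
   complex bracket, the term [y, y'] lies in f and therefore acts trivially on ker \<beta>. *)
lemma module: "lie_module (cbr br) L act V"
  unfolding lie_module_def
proof (intro conjI ballI)
  show "subspace V" by (auto simp: subspace_def fperp_def tmap_simps)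
  show "bilinear_on L V act" by (simp add: bilinear_on_def linear_on_def coad_simps)
  fix u v a assume "u \<in> L" and v: "v \<in> L" and a: "a \<in> V"
  show "act u a \<in> V" using a by (simp add: V_iff beta_equivariant br_simps)
  obtain e where e: "snd v = \<beta> e" using v L_iff by auto
  have "coad br (br (snd u) (snd v)) a = 0"
    using coad_image_kernel[of a] a by (simp add: e V_iff beta_equivariant[symmetric])
  then show "act (cbr br u v) a = act u (act v a) - act v (act u a)"
    by (simp add: cbr_def coad_simps coad_bracket)
qed

lemma tau_alt:
  assumes "u \<in> L" "v \<in> L"
  shows "tau br s \<sigma> u v =
    \<sigma> *\<^sub>R (coad br (fst u) (s (snd v)) - coad br (fst v) (s (snd u)) - s (snd (cbr br u v)))"
proof -
  have "s (snd (cbr br u v)) = s (br (fst u) (snd v)) - s (br (fst v) (snd u))"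
    using assms s_diff[of "br (fst u) (snd v)" "br (fst v) (snd u)"] image_ideal
    by (simp add: cbr_def L_iff br_antisym[of "snd u" "fst v"])
  then show ?thesis unfolding tau_def by (simp only:) (simp add: algebra_simps)
qed

(* \<beta> kills \<tau> because \<beta> \<circ> s = id on f and \<beta> is equivariant. *)
lemma tau_values: "u \<in> L \<Longrightarrow> v \<in> L \<Longrightarrow> tau br s \<sigma> u v \<in> V"
  by (simp add: V_iff L_iff tau_def tmap_simps beta_equivariant beta_s image_ideal)

lemma tau_bilinear: "bilinear_on L L (tau br s \<sigma>)"
  unfolding bilinear_on_def linear_on_def
proof (intro conjI ballI allI)
  fix u v w c assume "u \<in> L" "v \<in> L" "w \<in> L"
  then have snd_in: "snd u \<in> range \<beta>" "snd v \<in> range \<beta>" "snd w \<in> range \<beta>"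
    and br_in: "br x (snd u) \<in> range \<beta>" "br x (snd v) \<in> range \<beta>" "br x (snd w) \<in> range \<beta>" for x
    using L_iff image_ideal by auto
  show "tau br s \<sigma> u (v + w) = tau br s \<sigma> u v + tau br s \<sigma> u w"
    and "tau br s \<sigma> (v + w) u = tau br s \<sigma> v u + tau br s \<sigma> w u"
    and "tau br s \<sigma> u (c *\<^sub>R v) = c *\<^sub>R tau br s \<sigma> u v"
    and "tau br s \<sigma> (c *\<^sub>R v) u = c *\<^sub>R tau br s \<sigma> v u"
    using snd_in br_in by (simp_all add: tau_def br_simps s_add s_scale coad_simps algebra_simps)
qed

(* The section terms of the coboundary cancel: s applied to the imaginary part of the
   complex Jacobiator. *)
lemma s_jacobiator:
  assumes "u \<in> L" "v \<in> L" "w \<in> L"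
  shows "s (snd (cbr br (cbr br u v) w)) = s (snd (cbr br (cbr br u w) v)) - s (snd (cbr br (cbr br v w) u))"
proof -
  have in_f: "snd (cbr br (cbr br u v) w) \<in> range \<beta>" "snd (cbr br (cbr br u w) v) \<in> range \<beta>"
      "snd (cbr br (cbr br v w) u) \<in> range \<beta>"
    using subalgebra assms by (auto simp: lie_subalgebra_def L_iff[symmetric])
  have "snd (cbr br (cbr br u v) w) = snd (cbr br (cbr br u w) v) - snd (cbr br (cbr br v w) u)"
    using cbr_jacobi_snd[of "fst u" "snd u" "fst v" "snd v" "fst w" "snd w"]
    by (simp add: algebra_simps)
  then show ?thesis using in_f s_diff by simp
qed

(* The cocycle condition: after expanding \<tau> by tau_alt, the section terms cancel by
   s_jacobiator, the g-terms by the representation property of ad\<^sup>*, and the remaining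
   f-terms by coad_image_cyclic. *)
lemma cocycle_identity:
  assumes u: "u \<in> L" and v: "v \<in> L" and w: "w \<in> L"
  shows "act u (tau br s \<sigma> v w) - act v (tau br s \<sigma> u w) + act w (tau br s \<sigma> u v)
     - tau br s \<sigma> (cbr br u v) w + tau br s \<sigma> (cbr br u w) v - tau br s \<sigma> (cbr br v w) u = 0"
proof -
  obtain x1 y1 x2 y2 x3 y3 where uvw: "u = (x1,y1)" "v = (x2,y2)" "w = (x3,y3)"
    by (metis prod.collapse)
  have y: "y1 \<in> range \<beta>" "y2 \<in> range \<beta>" "y3 \<in> range \<beta>" using u v w uvw L_iff by auto
  have cl: "cbr br u v \<in> L" "cbr br u w \<in> L" "cbr br v w \<in> L"
    using subalgebra u v w by (auto simp: lie_subalgebra_def)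
  have fst_br: "fst (cbr br u v) = br x1 x2 - br y1 y2" "fst (cbr br u w) = br x1 x3 - br y1 y3"
    "fst (cbr br v w) = br x2 x3 - br y2 y3" by (simp_all add: cbr_def uvw)
  have f_cyclic: "coad br (br y1 y2) (s y3) = coad br (br y1 y3) (s y2) - coad br (br y2 y3) (s y1)"
    using coad_image_cyclic[of "s y1" "s y2" "s y3"] y by (simp add: beta_s algebra_simps)
  show ?thesis
    unfolding tau_alt[OF v w] tau_alt[OF u w] tau_alt[OF u v]
      tau_alt[OF cl(1) w] tau_alt[OF cl(2) v] tau_alt[OF cl(3) u] s_jacobiator[OF u v w] fst_br
    by (simp add: uvw coad_simps coad_bracket[of x1 x2] coad_bracket[of x1 x3] coad_bracket[of x2 x3]
        f_cyclic algebra_simps)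
qed

lemma cocycle: "lie_2cocycle (cbr br) L act V (tau br s \<sigma>)"
  unfolding lie_2cocycle_def
  using tau_values tau_bilinear cocycle_identity by (simp add: tau_def)

lemma Phi_eq: "Phi (skew_part R) s \<sigma> ((x,y),a) = (x - \<alpha> (\<sigma> *\<^sub>R s y + a), \<sigma> *\<^sub>R s y + a)"
  by (simp add: Phi_def tmap_simps algebra_simps)

(* \<Phi> is a homomorphism: on both sides the g^*-component is ad\<^sup>*(x) c' - ad\<^sup>*(x') c, and the
   g-components agree by alpha_bracket_defect, since \<beta> c = \<sigma> y and \<sigma>\<^sup>2 = 1. *)
lemma Phi_hom:
  assumes p: "p \<in> L \<times> V" and q: "q \<in> L \<times> V"
  shows "Phi (skew_part R) s \<sigma> (semidirect (cbr br) act (tau br s \<sigma>) p q)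
       = dbr br (skew_part R) (Phi (skew_part R) s \<sigma> p) (Phi (skew_part R) s \<sigma> q)"
proof -
  obtain x y a x' y' a' where pq: "p = ((x,y),a)" "q = ((x',y'),a')" by (metis prod.collapse)
  have y: "y \<in> range \<beta>" "y' \<in> range \<beta>" and a: "\<beta> a = 0" "\<beta> a' = 0"
    using p q pq L_iff V_iff by auto
  define c c' where "c = \<sigma> *\<^sub>R s y + a" and "c' = \<sigma> *\<^sub>R s y' + a'"
  have "\<beta> c = \<sigma> *\<^sub>R y" "\<beta> c' = \<sigma> *\<^sub>R y'" using y a beta_s by (simp_all add: c_def c'_def tmap_simps)
  then have defect: "br (\<alpha> c) (\<alpha> c') - \<alpha> (brd br (skew_part R) c c') = br y y'"
    using alpha_bracket_defect[of c c'] sign_square by (simp add: br_simps)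
  have tau: "tau br s \<sigma> (x,y) (x',y') =
      \<sigma> *\<^sub>R (coad br x (s y') - coad br x' (s y) - s (snd (cbr br (x,y) (x',y'))))"
    using tau_alt[of "(x,y)" "(x',y')"] y L_iff by simp
  have imag: "\<sigma> *\<^sub>R s (snd (cbr br (x,y) (x',y'))) + (coad br x a' - coad br x' a + tau br s \<sigma> (x,y) (x',y'))
      = coad br x c' - coad br x' c"
    by (simp add: tau c_def c'_def coad_simps algebra_simps)
  have "Phi (skew_part R) s \<sigma> (semidirect (cbr br) act (tau br s \<sigma>) p q)
      = (br x x' - br y y' - \<alpha> (coad br x c' - coad br x' c), coad br x c' - coad br x' c)"
    using imag[symmetric] by (simp add: semidirect_def pq cbr_def Phi_eq)
  also have "\<dots> = dbr br (skew_part R) (Phi (skew_part R) s \<sigma> p) (Phi (skew_part R) s \<sigma> q)"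
    unfolding pq Phi_eq c_def[symmetric] c'_def[symmetric] dbr_graph
    using defect[symmetric] by (simp add: tmap_simps algebra_simps)
  finally show ?thesis .
qed

lemma Phi_linear: "linear_on (L \<times> V) (Phi (skew_part R) s \<sigma>)"
  unfolding linear_on_def
proof (intro conjI ballI allI)
  fix p q c assume "p \<in> L \<times> V" "q \<in> L \<times> V"
  then have "snd (fst p) \<in> range \<beta>" "snd (fst q) \<in> range \<beta>" using L_iff by auto
  then show "Phi (skew_part R) s \<sigma> (p + q) = Phi (skew_part R) s \<sigma> p + Phi (skew_part R) s \<sigma> q"
    and "Phi (skew_part R) s \<sigma> (c *\<^sub>R p) = c *\<^sub>R Phi (skew_part R) s \<sigma> p"
    by (simp_all add: Phi_def s_add s_scale tmap_simps algebra_simps)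
qed

(* Inverse of \<Phi>: (z, b) comes from y = \<sigma> \<beta> b, a = b - \<sigma> s(y), x = z + \<alpha> b. *)
lemma Phi_bij: "bij_betw (Phi (skew_part R) s \<sigma>) (L \<times> V) UNIV"
  unfolding bij_betw_def
proof
  show "inj_on (Phi (skew_part R) s \<sigma>) (L \<times> V)"
  proof (rule inj_onI)
    fix p q assume p: "p \<in> L \<times> V" and q: "q \<in> L \<times> V"
      and e: "Phi (skew_part R) s \<sigma> p = Phi (skew_part R) s \<sigma> q"
    obtain x y a x' y' a' where pq: "p = ((x,y),a)" "q = ((x',y'),a')" by (metis prod.collapse)
    have y: "y \<in> range \<beta>" "y' \<in> range \<beta>" and a: "\<beta> a = 0" "\<beta> a' = 0"
      using p q pq L_iff V_iff by auto
    have "(x - \<alpha> (\<sigma> *\<^sub>R s y + a), \<sigma> *\<^sub>R s y + a) = (x' - \<alpha> (\<sigma> *\<^sub>R s y' + a'), \<sigma> *\<^sub>R s y' + a')"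
      using e by (simp only: pq Phi_eq)
    then have c: "\<sigma> *\<^sub>R s y + a = \<sigma> *\<^sub>R s y' + a'"
      and x: "x - \<alpha> (\<sigma> *\<^sub>R s y + a) = x' - \<alpha> (\<sigma> *\<^sub>R s y' + a')"
      by blast+
    from arg_cong[OF c, of \<beta>] have "\<sigma> *\<^sub>R y = \<sigma> *\<^sub>R y'" using y a beta_s by (simp add: tmap_simps)
    then have "y = y'" using sign by auto
    moreover have "x = x'" using x unfolding c by simp
    ultimately show "p = q" using c pq by simp
  qed
  show "Phi (skew_part R) s \<sigma> ` (L \<times> V) = UNIV"
  proof (rule set_eqI, rule iffI)
    fix w :: "(real^'n) \<times> (real^'n)"
    obtain z b where w: "w = (z,b)" by (cases w)
    define y a where "y = \<sigma> *\<^sub>R \<beta> b" and "a = b - \<sigma> *\<^sub>R s y"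
    have yF: "y \<in> range \<beta>" unfolding y_def by (metis rangeI tmap_simps(2))
    have "\<beta> a = 0" using yF beta_s sign_square by (simp add: a_def y_def tmap_simps)
    then have "((z + \<alpha> b, y), a) \<in> L \<times> V" using yF L_iff V_iff by simp
    moreover have "Phi (skew_part R) s \<sigma> ((z + \<alpha> b, y), a) = w" by (simp add: Phi_eq a_def w)
    ultimately show "w \<in> Phi (skew_part R) s \<sigma> ` (L \<times> V)" by (metis image_eqI)
  qed simp
qed

end

theorem theorem3p20:
  fixes br :: "real^'n::finite \<Rightarrow> real^'n \<Rightarrow> real^'n"
    and R :: "real^'n^'n"
    and s :: "real^'n \<Rightarrow> real^'n"
    and \<sigma> :: real
  assumes "lie_algebra br"
    and "typeII_CYBE br R"
    and "ad_invariant br (sym_part R)"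
    and "linear_on (range (tmap (sym_part R))) s"
    and "\<forall>y\<in>range (tmap (sym_part R)). tmap (sym_part R) (s y) = y"
    and "\<sigma> = 1 \<or> \<sigma> = -1"
  shows "lie_subalgebra (cbr br) (g_if (sym_part R))
    \<and> lie_module (cbr br) (g_if (sym_part R)) (\<lambda>u a. coad br (fst u) a) (fperp (sym_part R))
    \<and> lie_2cocycle (cbr br) (g_if (sym_part R)) (\<lambda>u a. coad br (fst u) a) (fperp (sym_part R)) (tau br s \<sigma>)
    \<and> lie_iso (semidirect (cbr br) (\<lambda>u a. coad br (fst u) a) (tau br s \<sigma>))
              (g_if (sym_part R) \<times> fperp (sym_part R))
              (dbr br (skew_part R)) UNIV
              (Phi (skew_part R) s \<sigma>)"
proof -
  interpret double_decomposition br R s \<sigma>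
    using assms by unfold_locales
  show ?thesis
    using subalgebra module cocycle Phi_bij Phi_linear Phi_hom by (simp add: lie_iso_def)
qed

end
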